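(* For every $n\ge0$, the localization $(\underline n\downarrow\mathbf{Fin})[\mathcal I^{-1}]$, obtained from the coslice category $(\underline n\downarrow\mathbf{Fin})$ by formally inverting all morphisms whose underlying map is injective, is a thin category.
   Context: $\mathbf{Fin}$ is the category with objects $\underline k=\{1,\dots,k\}$ for $k\ge0$ and morphisms all functions. $\mathcal I$ denotes the injective maps (inverting the injective order-preserving maps together with the isomorphisms inverts all injective maps). Objects of $(\underline n\downarrow\mathbf{Fin})$ are functions $\underline n\to\underline k$, morphisms are functions $\underline k\to\underline k'$ making the triangle commute. A category is thin if any two parallel morphisms are equal. *)

theory Defs
  imports "HOL-Library.FuncSet"
begin

text \<open>Finite ordinals are modelled 0-based: the set {..<k} stands for {1,...,k}.
  An object of the coslice category (n | Fin) is a pair (k, f) with f : {..<n} -> {..<k}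
  (extensional, i.e. undefined outside {..<n}).\<close>

type_synonym cobj = "nat \<times> (nat \<Rightarrow> nat)"

definition cs_obj :: "nat \<Rightarrow> cobj \<Rightarrow> bool" where
  "cs_obj n a \<longleftrightarrow> snd a \<in> {..<n} \<rightarrow>\<^sub>E {..<fst a}"

definition cs_mor :: "nat \<Rightarrow> cobj \<Rightarrow> (nat \<Rightarrow> nat) \<Rightarrow> cobj \<Rightarrow> bool" where
  "cs_mor n a g b \<longleftrightarrow> cs_obj n a \<and> cs_obj n b \<and> g \<in> {..<fst a} \<rightarrow>\<^sub>E {..<fst b}
     \<and> (\<forall>i<n. g (snd a i) = snd b i)"

definition cs_id :: "cobj \<Rightarrow> (nat \<Rightarrow> nat)" where
  "cs_id a = restrict (\<lambda>x. x) {..<fst a}"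

definition cs_comp :: "cobj \<Rightarrow> (nat \<Rightarrow> nat) \<Rightarrow> (nat \<Rightarrow> nat) \<Rightarrow> (nat \<Rightarrow> nat)" where
  "cs_comp a h g = compose {..<fst a} h g"

text \<open>Generating arrows of the localization: Fwd a g b is the morphism g : a -> b;
  Bwd b g a is the formal inverse (an arrow b -> a) of an injective morphism g : a -> b.\<close>
datatype edge = Fwd cobj "nat \<Rightarrow> nat" cobj | Bwd cobj "nat \<Rightarrow> nat" cobj

fun edge_ok :: "nat \<Rightarrow> edge \<Rightarrow> bool" where
  "edge_ok n (Fwd a g b) \<longleftrightarrow> cs_mor n a g b"
| "edge_ok n (Bwd b g a) \<longleftrightarrow> cs_mor n a g b \<and> inj_on g {..<fst a}"

fun edge_src :: "edge \<Rightarrow> cobj" where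
  "edge_src (Fwd a g b) = a" | "edge_src (Bwd b g a) = b"

fun edge_tgt :: "edge \<Rightarrow> cobj" where
  "edge_tgt (Fwd a g b) = b" | "edge_tgt (Bwd b g a) = a"

inductive zpath :: "nat \<Rightarrow> cobj \<Rightarrow> edge list \<Rightarrow> cobj \<Rightarrow> bool" for n where
  nil: "cs_obj n a \<Longrightarrow> zpath n a [] a"
| cons: "edge_ok n e \<Longrightarrow> edge_src e = a \<Longrightarrow> zpath n (edge_tgt e) es b \<Longrightarrow> zpath n a (e # es) b"

inductive zrel :: "nat \<Rightarrow> cobj \<Rightarrow> edge list \<Rightarrow> edge list \<Rightarrow> cobj \<Rightarrow> bool" for n where
  comp: "cs_mor n a g b \<Longrightarrow> cs_mor n b h c \<Longrightarrow>
           zrel n a [Fwd a g b, Fwd b h c] [Fwd a (cs_comp a h g) c] c"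
| ident: "cs_obj n a \<Longrightarrow> zrel n a [Fwd a (cs_id a) a] [] a"
| inv_left: "cs_mor n a g b \<Longrightarrow> inj_on g {..<fst a} \<Longrightarrow>
           zrel n a [Fwd a g b, Bwd b g a] [] a"
| inv_right: "cs_mor n a g b \<Longrightarrow> inj_on g {..<fst a} \<Longrightarrow>
           zrel n b [Bwd b g a, Fwd a g b] [] b"

inductive zeq :: "nat \<Rightarrow> cobj \<Rightarrow> edge list \<Rightarrow> edge list \<Rightarrow> cobj \<Rightarrow> bool" for n where
  refl: "zpath n a xs b \<Longrightarrow> zeq n a xs xs b"
| step: "zpath n a' us a \<Longrightarrow> zrel n a xs ys b \<Longrightarrow> zpath n b vs b' \<Longrightarrow>
           zeq n a' (us @ xs @ vs) (us @ ys @ vs) b'"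
| sym: "zeq n a xs ys b \<Longrightarrow> zeq n a ys xs b"
| trans: "zeq n a xs ys b \<Longrightarrow> zeq n a ys zs b \<Longrightarrow> zeq n a xs zs b"

definition localization_thin :: "nat \<Rightarrow> bool" where
  "localization_thin n \<longleftrightarrow>
     (\<forall>a b xs ys. zpath n a xs b \<longrightarrow> zpath n a ys b \<longrightarrow> zeq n a xs ys b)"

end

theory Submission
  imports Defs
begin

(* Every zigzag from a to b is equal in the localization to one normal form
   incl_a^-1 . h . incl_b, where incl_a is the inclusion into a of its image object (the image
   of the structure map n -> k, enumerated by {..<m}). Since incl_a is injective it is inverted.
   A zigzag from a to b forces the kernel of a to be contained in that of b, and then there is
   exactly one map h between the image objects under n, because their structure maps are
   surjective. Prefixing a generating arrow to a normal form and rewriting with the relations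
   of the localization yields the normal form again, so induction on the length of a zigzag
   reduces it to its normal form. *)

definition ker_le :: "nat \<Rightarrow> cobj \<Rightarrow> cobj \<Rightarrow> bool" where
  "ker_le n a b \<longleftrightarrow> (\<forall>i<n. \<forall>j<n. snd a i = snd a j \<longrightarrow> snd b i = snd b j)"

lemma ker_le_refl: "ker_le n a a"
  by (simp add: ker_le_def)

lemma ker_le_trans: "ker_le n a b \<Longrightarrow> ker_le n b c \<Longrightarrow> ker_le n a c"
  unfolding ker_le_def by blast

lemma cs_mor_ker_le: "cs_mor n a g b \<Longrightarrow> ker_le n a b"
  unfolding cs_mor_def ker_le_def by metis

lemma cs_mor_inj_ker_le:
  assumes "cs_mor n a g b" "inj_on g {..<fst a}"
  shows "ker_le n b a"
  unfolding ker_le_def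
proof (intro allI impI)
  fix i j assume "i < n" "j < n" "snd b i = snd b j"
  with assms(1) have "g (snd a i) = g (snd a j)" "snd a i \<in> {..<fst a}" "snd a j \<in> {..<fst a}"
    by (auto simp: cs_mor_def cs_obj_def)
  then show "snd a i = snd a j" using assms(2) by (auto dest: inj_onD)
qed

lemma edge_ker_le: "edge_ok n e \<Longrightarrow> ker_le n (edge_src e) (edge_tgt e)"
  by (cases e) (auto intro: cs_mor_ker_le cs_mor_inj_ker_le)

definition image_size :: "nat \<Rightarrow> cobj \<Rightarrow> nat" where
  "image_size n a = card (snd a ` {..<n})"

definition image_incl :: "nat \<Rightarrow> cobj \<Rightarrow> nat \<Rightarrow> nat" where
  "image_incl n a = restrict (SOME \<phi>. bij_betw \<phi> {..<image_size n a} (snd a ` {..<n}))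
     {..<image_size n a}"

definition image_proj :: "nat \<Rightarrow> cobj \<Rightarrow> nat \<Rightarrow> nat" where
  "image_proj n a =
     restrict (\<lambda>i. inv_into {..<image_size n a} (image_incl n a) (snd a i)) {..<n}"

definition image_obj :: "nat \<Rightarrow> cobj \<Rightarrow> cobj" where
  "image_obj n a = (image_size n a, image_proj n a)"

lemma fst_image_obj [simp]: "fst (image_obj n a) = image_size n a"
  by (simp add: image_obj_def)

lemma bij_betw_image_incl: "bij_betw (image_incl n a) {..<image_size n a} (snd a ` {..<n})"
proof -
  have "\<exists>\<phi>. bij_betw \<phi> {..<image_size n a} (snd a ` {..<n})"
    using ex_bij_betw_nat_finite[of "snd a ` {..<n}"] by (simp add: image_size_def lessThan_atLeast0)
  then have "bij_betw (SOME \<phi>. bij_betw \<phi> {..<image_size n a} (snd a ` {..<n}))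
      {..<image_size n a} (snd a ` {..<n})"
    by (rule someI_ex)
  then show ?thesis
    unfolding image_incl_def by (rule bij_betw_cong[THEN iffD1, rotated]) simp
qed

lemma image_incl_onto: "image_incl n a ` {..<image_size n a} = snd a ` {..<n}"
  and inj_on_image_incl: "inj_on (image_incl n a) {..<image_size n a}"
  using bij_betw_image_incl[of n a] by (simp_all add: bij_betw_def)

lemma image_incl_extensional: "image_incl n a \<in> extensional {..<image_size n a}"
  by (simp add: image_incl_def)

lemma image_proj_less: "i < n \<Longrightarrow> image_proj n a i < image_size n a"
  using inv_into_into[of "snd a i" "image_incl n a" "{..<image_size n a}"]
  by (simp add: image_proj_def image_incl_onto)

lemma image_incl_image_proj: "i < n \<Longrightarrow> image_incl n a (image_proj n a i) = snd a i"
  using f_inv_into_f[of "snd a i" "image_incl n a" "{..<image_size n a}"]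
  by (simp add: image_proj_def image_incl_onto)

lemma image_proj_surj: "j < image_size n a \<Longrightarrow> \<exists>i<n. image_proj n a i = j"
proof -
  assume j: "j < image_size n a"
  then obtain i where i: "i < n" "snd a i = image_incl n a j"
    using image_incl_onto[of n a] by (metis imageE image_eqI lessThan_iff)
  then have "image_proj n a i = j"
    using j inj_on_image_incl by (simp add: image_proj_def)
  with i show ?thesis by blast
qed

lemma image_proj_eq_iff:
  assumes "i < n" "j < n"
  shows "image_proj n a i = image_proj n a j \<longleftrightarrow> snd a i = snd a j"
proof
  assume "image_proj n a i = image_proj n a j"
  then show "snd a i = snd a j" using assms image_incl_image_proj by metis
qed (use assms in \<open>simp add: image_proj_def\<close>)

lemma cs_obj_image_obj: "cs_obj n (image_obj n a)"
  by (auto simp: cs_obj_def image_obj_def PiE_iff image_proj_less) (simp add: image_proj_def)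

lemma cs_mor_image_incl:
  assumes "cs_obj n a"
  shows "cs_mor n (image_obj n a) (image_incl n a) a"
proof -
  have "image_incl n a ` {..<image_size n a} \<subseteq> {..<fst a}"
    using assms by (auto simp: image_incl_onto cs_obj_def)
  moreover note image_incl_extensional
  ultimately show ?thesis
    using assms cs_obj_image_obj[of n a]
    by (auto simp: cs_mor_def image_obj_def image_incl_image_proj PiE_iff)
qed

lemma image_obj_map_eqI:
  assumes "F \<in> extensional {..<image_size n a}" "G \<in> extensional {..<image_size n a}"
    and "\<And>i. i < n \<Longrightarrow> F (image_proj n a i) = G (image_proj n a i)"
  shows "F = G"
proof (rule extensionalityI[OF assms(1,2)])
  fix j assume "j \<in> {..<image_size n a}"
  then obtain i where "i < n" "image_proj n a i = j" using image_proj_surj by blast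
  then show "F j = G j" using assms(3) by blast
qed

definition image_hom :: "nat \<Rightarrow> cobj \<Rightarrow> cobj \<Rightarrow> nat \<Rightarrow> nat" where
  "image_hom n a b =
     restrict (\<lambda>j. image_proj n b (SOME i. i < n \<and> image_proj n a i = j)) {..<image_size n a}"

lemma image_hom_extensional: "image_hom n a b \<in> extensional {..<image_size n a}"
  by (simp add: image_hom_def)

lemma image_hom_image_proj:
  assumes "ker_le n a b" "i < n"
  shows "image_hom n a b (image_proj n a i) = image_proj n b i"
proof -
  define i' where "i' = (SOME i'. i' < n \<and> image_proj n a i' = image_proj n a i)"
  have i': "i' < n" "image_proj n a i' = image_proj n a i"
    unfolding i'_def using someI_ex[of "\<lambda>i'. i' < n \<and> image_proj n a i' = image_proj n a i"]
      assms(2) by blast+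
  then have "snd b i' = snd b i"
    using assms image_proj_eq_iff unfolding ker_le_def by metis
  then have "image_proj n b i' = image_proj n b i"
    using assms(2) i'(1) by (simp add: image_proj_eq_iff)
  then show ?thesis
    using assms(2) by (simp add: image_hom_def image_proj_less i'_def)
qed

lemma cs_mor_image_hom:
  assumes "ker_le n a b"
  shows "cs_mor n (image_obj n a) (image_hom n a b) (image_obj n b)"
proof -
  have "image_hom n a b j < image_size n b" if j: "j < image_size n a" for j
  proof -
    obtain i where "i < n" "image_proj n a i = j" using image_proj_surj[OF j] by blast
    then show ?thesis using assms by (metis image_hom_image_proj image_proj_less)
  qed
  then have "image_hom n a b \<in> {..<image_size n a} \<rightarrow>\<^sub>E {..<image_size n b}"
    by (simp add: PiE_iff image_hom_extensional)
  then show ?thesis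
    using assms by (simp add: cs_mor_def image_obj_def cs_obj_image_obj[unfolded image_obj_def]
        image_hom_image_proj)
qed

lemma cs_comp_image_obj_extensional:
  "cs_comp (image_obj n a) h g \<in> extensional {..<image_size n a}"
  by (simp add: cs_comp_def image_obj_def)

lemma cs_comp_image_proj:
  "i < n \<Longrightarrow> cs_comp (image_obj n a) h g (image_proj n a i) = h (g (image_proj n a i))"
  by (simp add: cs_comp_def image_obj_def compose_eq image_proj_less)

lemma zpath_Nil_iff: "zpath n a [] b \<longleftrightarrow> cs_obj n a \<and> b = a"
  by (auto intro: zpath.nil elim: zpath.cases)

lemma zpath_Cons_iff:
  "zpath n a (e # es) b \<longleftrightarrow> edge_ok n e \<and> edge_src e = a \<and> zpath n (edge_tgt e) es b"
  by (auto intro: zpath.cons elim: zpath.cases)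

lemma zpath_append: "zpath n a xs b \<Longrightarrow> zpath n b ys c \<Longrightarrow> zpath n a (xs @ ys) c"
  by (induction rule: zpath.induct) (auto simp: zpath_Cons_iff)

lemma zpath_cs_obj: "zpath n a xs b \<Longrightarrow> cs_obj n a \<and> cs_obj n b"
  by (induction rule: zpath.induct) (auto elim!: edge_ok.elims simp: cs_mor_def)

lemma zpath_ker_le: "zpath n a xs b \<Longrightarrow> ker_le n a b"
  by (induction rule: zpath.induct) (simp add: ker_le_refl, metis edge_ker_le ker_le_trans)

lemma cs_comp_mor: "cs_mor n a g b \<Longrightarrow> cs_mor n b h c \<Longrightarrow> cs_mor n a (cs_comp a h g) c"
  by (auto simp: cs_mor_def cs_obj_def cs_comp_def compose_eq PiE_iff)

lemma cs_id_mor: "cs_obj n a \<Longrightarrow> cs_mor n a (cs_id a) a"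
  by (auto simp: cs_mor_def cs_id_def cs_obj_def PiE_iff)

lemma zrel_zpath: "zrel n a xs ys b \<Longrightarrow> zpath n a xs b \<and> zpath n a ys b"
  by (induction rule: zrel.induct)
    (auto simp: zpath_Cons_iff zpath_Nil_iff cs_comp_mor cs_id_mor, auto simp: cs_mor_def)

lemma zeq_zpath: "zeq n a xs ys b \<Longrightarrow> zpath n a xs b \<and> zpath n a ys b"
  by (induction rule: zeq.induct) (auto dest!: zrel_zpath intro: zpath_append)

lemma zeq_in_context:
  "zeq n a xs ys b \<Longrightarrow> zpath n a' us a \<Longrightarrow> zpath n b vs b' \<Longrightarrow>
    zeq n a' (us @ xs @ vs) (us @ ys @ vs) b'"
proof (induction arbitrary: a' us b' vs rule: zeq.induct)
  case (refl a xs b)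
  then show ?case by (intro zeq.refl zpath_append) auto
next
  case (step a0 us0 a xs ys b vs0 b0)
  have "zeq n a' ((us @ us0) @ xs @ (vs0 @ vs)) ((us @ us0) @ ys @ (vs0 @ vs)) b'"
    by (rule zeq.step) (use step in \<open>auto intro: zpath_append\<close>)
  then show ?case by simp
next
  case (sym a xs ys b)
  then show ?case by (meson zeq.sym)
next
  case (trans a xs ys b zs)
  then show ?case by (meson zeq.trans)
qed

(* L and R are left free so that each rewrite step of a calculation can be stated with the
   lists in the shape the calculation needs; the equations are then discharged by simp. *)
lemma zeq_rewrite:
  assumes "zeq n x xs ys y" "zpath n a us x" "zpath n y vs b"
    and "L = us @ xs @ vs" "R = us @ ys @ vs"
  shows "zeq n a L R b"
  using zeq_in_context[OF assms(1-3)] assms(4,5) by simp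

lemma zeq_append:
  assumes "zeq n a xs xs' b" "zeq n b ys ys' c"
  shows "zeq n a (xs @ ys) (xs' @ ys') c"
proof -
  have "zpath n a xs' b" "zpath n b ys c" "cs_obj n a" "cs_obj n c"
    using zeq_zpath[OF assms(1)] zeq_zpath[OF assms(2)] zpath_cs_obj by blast+
  then have "zeq n a ([] @ xs @ ys) ([] @ xs' @ ys) c"
    and "zeq n a (xs' @ ys @ []) (xs' @ ys' @ []) c"
    by (intro zeq_in_context assms; simp add: zpath_Nil_iff)+
  then show ?thesis by (simp add: zeq.trans)
qed

lemma zrel_zeq:
  assumes "zrel n a xs ys b"
  shows "zeq n a xs ys b"
proof -
  have "cs_obj n a" "cs_obj n b"
    using zrel_zpath[OF assms] zpath_cs_obj by blast+
  then have "zeq n a ([] @ xs @ []) ([] @ ys @ []) b"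
    by (intro zeq.step[OF _ assms]) (simp_all add: zpath_Nil_iff)
  then show ?thesis by simp
qed

lemmas zeq_comp = zrel.comp[THEN zrel_zeq]
  and zeq_ident = zrel.ident[THEN zrel_zeq]
  and zeq_inv_left = zrel.inv_left[THEN zrel_zeq]
  and zeq_inv_right = zrel.inv_right[THEN zrel_zeq]

declare zeq.trans [trans]

definition incl_edge :: "nat \<Rightarrow> cobj \<Rightarrow> edge" where
  "incl_edge n a = Fwd (image_obj n a) (image_incl n a) a"

definition incl_inv_edge :: "nat \<Rightarrow> cobj \<Rightarrow> edge" where
  "incl_inv_edge n a = Bwd a (image_incl n a) (image_obj n a)"

definition normal_path :: "nat \<Rightarrow> cobj \<Rightarrow> cobj \<Rightarrow> edge list" where
  "normal_path n a b =
     [incl_inv_edge n a, Fwd (image_obj n a) (image_hom n a b) (image_obj n b), incl_edge n b]"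

lemmas normal_path_simps = zpath_Cons_iff zpath_Nil_iff normal_path_def incl_edge_def
  incl_inv_edge_def cs_obj_image_obj cs_mor_image_incl inj_on_image_incl cs_mor_image_hom

lemma zeq_incl_incl_inv:
  "cs_obj n a \<Longrightarrow> zeq n (image_obj n a) [incl_edge n a, incl_inv_edge n a] [] (image_obj n a)"
  using zeq_inv_left[OF cs_mor_image_incl] inj_on_image_incl
  by (simp add: incl_edge_def incl_inv_edge_def)

lemma zeq_incl_inv_incl: "cs_obj n a \<Longrightarrow> zeq n a [incl_inv_edge n a, incl_edge n a] [] a"
  using zeq_inv_right[OF cs_mor_image_incl] inj_on_image_incl
  by (simp add: incl_edge_def incl_inv_edge_def)

lemma zeq_normal_path_self:
  assumes a: "cs_obj n a"
  shows "zeq n a (normal_path n a a) [] a"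
proof -
  have id: "image_hom n a a = cs_id (image_obj n a)"
    by (rule image_obj_map_eqI[OF image_hom_extensional])
      (simp_all add: cs_id_def image_obj_def image_hom_image_proj ker_le_refl image_proj_less)
  have "zeq n a (normal_path n a a) [incl_inv_edge n a, incl_edge n a] a"
    by (rule zeq_rewrite[OF zeq_ident[OF cs_obj_image_obj],
          where us="[incl_inv_edge n a]" and vs="[incl_edge n a]"])
      (simp_all add: normal_path_simps a id)
  also have "zeq n a [incl_inv_edge n a, incl_edge n a] [] a"
    using zeq_incl_inv_incl[OF a] .
  finally show ?thesis .
qed

lemma zeq_normal_path_append:
  assumes a: "cs_obj n a" and c: "cs_obj n c" and b: "cs_obj n b"
    and ac: "ker_le n a c" and cb: "ker_le n c b"
  shows "zeq n a (normal_path n a c @ normal_path n c b) (normal_path n a b) b"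
proof -
  let ?h = "\<lambda>x y. Fwd (image_obj n x) (image_hom n x y) (image_obj n y)"
  have hom_comp: "cs_comp (image_obj n a) (image_hom n c b) (image_hom n a c) = image_hom n a b"
    by (rule image_obj_map_eqI[OF cs_comp_image_obj_extensional image_hom_extensional])
      (simp add: cs_comp_image_proj image_hom_image_proj ac cb ker_le_trans[OF ac cb])
  have "zeq n a (normal_path n a c @ normal_path n c b)
      [incl_inv_edge n a, ?h a c, ?h c b, incl_edge n b] b"
    by (rule zeq_rewrite[OF zeq_incl_incl_inv[OF c],
          where us="[incl_inv_edge n a, ?h a c]" and vs="[?h c b, incl_edge n b]"])
      (simp_all add: normal_path_simps a b c ac cb)
  also have "zeq n a [incl_inv_edge n a, ?h a c, ?h c b, incl_edge n b] (normal_path n a b) b"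
    by (rule zeq_rewrite[OF zeq_comp[OF cs_mor_image_hom[OF ac] cs_mor_image_hom[OF cb]],
          where us="[incl_inv_edge n a]" and vs="[incl_edge n b]"])
      (simp_all add: normal_path_simps a b hom_comp)
  finally show ?thesis .
qed

lemma zeq_Fwd_normal_path:
  assumes g: "cs_mor n a g c"
  shows "zeq n a [Fwd a g c] (normal_path n a c) c"
proof -
  have a: "cs_obj n a" and c: "cs_obj n c"
    using g by (simp_all add: cs_mor_def)
  have ac: "ker_le n a c"
    using g by (rule cs_mor_ker_le)
  have incl_comp: "cs_comp (image_obj n a) g (image_incl n a)
      = cs_comp (image_obj n a) (image_incl n c) (image_hom n a c)"
    using g
    by (intro image_obj_map_eqI[OF cs_comp_image_obj_extensional cs_comp_image_obj_extensional])
      (simp add: cs_comp_image_proj image_hom_image_proj ac image_incl_image_proj cs_mor_def)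
  have "zeq n a [Fwd a g c] [incl_inv_edge n a, incl_edge n a, Fwd a g c] c"
    by (rule zeq_rewrite[OF zeq.sym, OF zeq_incl_inv_incl[OF a],
          where us="[]" and vs="[Fwd a g c]"])
      (simp_all add: normal_path_simps a c g)
  also have "zeq n a [incl_inv_edge n a, incl_edge n a, Fwd a g c]
      [incl_inv_edge n a, Fwd (image_obj n a) (cs_comp (image_obj n a) g (image_incl n a)) c] c"
    by (rule zeq_rewrite[OF zeq_comp[OF cs_mor_image_incl[OF a] g],
          where us="[incl_inv_edge n a]" and vs="[]"])
      (simp_all add: normal_path_simps a c)
  also have "zeq n a
      [incl_inv_edge n a, Fwd (image_obj n a) (cs_comp (image_obj n a) g (image_incl n a)) c]
      (normal_path n a c) c"
    by (rule zeq_rewrite[OF zeq.sym, OF zeq_comp[OF cs_mor_image_hom[OF ac] cs_mor_image_incl[OF c]],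
          where us="[incl_inv_edge n a]" and vs="[]"])
      (simp_all add: normal_path_simps a c g incl_comp)
  finally show ?thesis .
qed

lemma zeq_Bwd_normal_path:
  assumes g: "cs_mor n c g a" and inj: "inj_on g {..<fst c}"
  shows "zeq n a [Bwd a g c] (normal_path n a c) c"
proof -
  have a: "cs_obj n a" and c: "cs_obj n c"
    using g by (simp_all add: cs_mor_def)
  have ac: "ker_le n a c"
    using g inj by (rule cs_mor_inj_ker_le)
  let ?hac = "Fwd (image_obj n a) (image_hom n a c) (image_obj n c)"
  let ?g_incl = "cs_comp (image_obj n c) g (image_incl n c)"
  have incl_comp: "cs_comp (image_obj n a) ?g_incl (image_hom n a c) = image_incl n a"
    using g
    by (intro image_obj_map_eqI[OF cs_comp_image_obj_extensional image_incl_extensional])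
      (simp add: cs_comp_image_proj image_hom_image_proj ac image_incl_image_proj cs_mor_def
        image_proj_less)
  have "zeq n a [Bwd a g c] [incl_inv_edge n a, incl_edge n a, Bwd a g c] c"
    by (rule zeq_rewrite[OF zeq.sym, OF zeq_incl_inv_incl[OF a],
          where us="[]" and vs="[Bwd a g c]"])
      (simp_all add: normal_path_simps a c g inj)
  also have "zeq n a [incl_inv_edge n a, incl_edge n a, Bwd a g c]
      [incl_inv_edge n a, ?hac, Fwd (image_obj n c) ?g_incl a, Bwd a g c] c"
    by (rule zeq_rewrite[OF zeq.sym,
          OF zeq_comp[OF cs_mor_image_hom[OF ac] cs_comp_mor[OF cs_mor_image_incl[OF c] g]],
          where us="[incl_inv_edge n a]" and vs="[Bwd a g c]"])
      (simp_all add: normal_path_simps a c g inj incl_comp)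
  also have "zeq n a [incl_inv_edge n a, ?hac, Fwd (image_obj n c) ?g_incl a, Bwd a g c]
      [incl_inv_edge n a, ?hac, incl_edge n c, Fwd c g a, Bwd a g c] c"
    by (rule zeq_rewrite[OF zeq.sym, OF zeq_comp[OF cs_mor_image_incl[OF c] g],
          where us="[incl_inv_edge n a, ?hac]" and vs="[Bwd a g c]"])
      (simp_all add: normal_path_simps a c g inj ac)
  also have "zeq n a [incl_inv_edge n a, ?hac, incl_edge n c, Fwd c g a, Bwd a g c]
      (normal_path n a c) c"
    by (rule zeq_rewrite[OF zeq_inv_left[OF g inj],
          where us="[incl_inv_edge n a, ?hac, incl_edge n c]" and vs="[]"])
      (simp_all add: normal_path_simps a c ac)
  finally show ?thesis .
qed

lemma zeq_edge_normal_path: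
  "edge_ok n e \<Longrightarrow> zeq n (edge_src e) [e] (normal_path n (edge_src e) (edge_tgt e)) (edge_tgt e)"
  by (cases e) (simp_all add: zeq_Fwd_normal_path zeq_Bwd_normal_path)

lemma zpath_zeq_normal_path: "zpath n a xs b \<Longrightarrow> zeq n a xs (normal_path n a b) b"
proof (induction rule: zpath.induct)
  case (nil a)
  then show ?case by (rule zeq.sym[OF zeq_normal_path_self])
next
  case (cons e a es b)
  let ?c = "edge_tgt e"
  have objs: "cs_obj n a" "cs_obj n ?c" "cs_obj n b"
    using zpath_cs_obj[OF zpath.cons[OF cons.hyps]] zpath_cs_obj[OF cons.hyps(3)] by blast+
  have "zeq n a ([e] @ es) (normal_path n a ?c @ normal_path n ?c b) b"
    using zeq_append[OF zeq_edge_normal_path[OF cons.hyps(1)] cons.IH] cons.hyps(2) by simp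
  also have "zeq n a (normal_path n a ?c @ normal_path n ?c b) (normal_path n a b) b"
    using zeq_normal_path_append[OF objs] edge_ker_le[OF cons.hyps(1)] cons.hyps(2)
      zpath_ker_le[OF cons.hyps(3)] by simp
  finally show ?case by simp
qed

theorem mainTheorem18:
  fixes n :: nat
  shows "localization_thin n"
  unfolding localization_thin_def
  by (meson zpath_zeq_normal_path zeq.sym zeq.trans)

end
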